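(* Let $n$ be a positive integer, let $c$ be the center of the star $S_n$, let $\nu$ be an end vertex of the path $P_n$, and let $v$ be any vertex of an $n$-vertex tree $T$. Then for every integer $k\geq 0$, $$n_k(c,S_n)\geq n_k(v,T)\geq n_k(\nu,P_n).$$
   Context: A subtree of a graph $G$ is a subgraph of $G$ that is a tree (distinguished as subgraphs), with the empty subtree also allowed. For a vertex $v$ of $G$, $n_k(v,G)$ is the number of subtrees of $G$ with exactly $k$ vertices that contain $v$. $S_n$ is the $n$-vertex star and $P_n$ the $n$-vertex path. *)

theory Defs
  imports Main
begin

definition simple_graph :: "'a set \<Rightarrow> 'a set set \<Rightarrow> bool" where
  "simple_graph V E \<longleftrightarrow> finite V \<and>
     (\<forall>e\<in>E. \<exists>x y. x \<noteq> y \<and> x \<in> V \<and> y \<in> V \<and> e = {x, y})"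

definition adj_rel :: "'a set set \<Rightarrow> ('a \<times> 'a) set" where
  "adj_rel E = {(x, y). {x, y} \<in> E}"

definition connected_graph :: "'a set \<Rightarrow> 'a set set \<Rightarrow> bool" where
  "connected_graph V E \<longleftrightarrow> V \<noteq> {} \<and> (\<forall>x\<in>V. \<forall>y\<in>V. (x, y) \<in> (adj_rel E)\<^sup>*)"

definition has_cycle :: "'a set \<Rightarrow> 'a set set \<Rightarrow> bool" where
  "has_cycle V E \<longleftrightarrow> (\<exists>xs. 3 \<le> length xs \<and> distinct xs \<and> set xs \<subseteq> V \<and>
     (\<forall>i. i + 1 < length xs \<longrightarrow> {xs ! i, xs ! (i + 1)} \<in> E) \<and> {last xs, hd xs} \<in> E)"

definition is_tree :: "'a set \<Rightarrow> 'a set set \<Rightarrow> bool" where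
  "is_tree V E \<longleftrightarrow> simple_graph V E \<and> connected_graph V E \<and> \<not> has_cycle V E"

definition subtrees :: "'a set \<Rightarrow> 'a set set \<Rightarrow> ('a set \<times> 'a set set) set" where
  "subtrees V E = {(V', E'). V' \<subseteq> V \<and> E' \<subseteq> E \<and> ((V' = {} \<and> E' = {}) \<or> is_tree V' E')}"

definition nk :: "nat \<Rightarrow> 'a \<Rightarrow> 'a set \<Rightarrow> 'a set set \<Rightarrow> nat" where
  "nk k v V E = card {(V', E') \<in> subtrees V E. card V' = k \<and> v \<in> V'}"

text \<open>Star S_n on vertices {0..<n} with center 0; path P_n on {0..<n} with ends 0 and n-1.\<close>
definition star_edges :: "nat \<Rightarrow> nat set set" where
  "star_edges n = {{0, i} | i. 0 < i \<and> i < n}"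

definition path_edges :: "nat \<Rightarrow> nat set set" where
  "path_edges n = {{i, i + 1} | i. i + 1 < n}"

end

theory Submission
  imports Defs "HOL-Library.Transitive_Closure_Table"
begin

(* A subtree of a tree is determined by its vertex set: two different trees on the same
   vertices would together contain a cycle. So n_k(v,T) is at most the number of k-subsets
   containing v, namely C(n-1,k-1), and the star attains this bound because every such subset
   spans a subtree through the centre. Conversely a subtree of P_n through an end vertex is an
   interval starting there, so n_k(nu,P_n) <= 1, while growing {v} by one leaf at a time yields
   a subtree through v of every size 1..n. *)

lemma rtrancl_imp_distinct_walk:
  assumes "(x, y) \<in> R\<^sup>*"
  obtains xs where "distinct (x # xs)" "successively (\<lambda>a b. (a, b) \<in> R) (x # xs)"
    "last (x # xs) = y" "set xs \<subseteq> Range R"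
proof -
  have walk: "successively r (x # xs) \<and> last (x # xs) = y" if "rtrancl_path r x xs y"
    for r :: "'a \<Rightarrow> 'a \<Rightarrow> bool" and x xs y
    using that by (induction rule: rtrancl_path.induct) (auto simp: successively_Cons)
  have "(\<lambda>a b. (a, b) \<in> R)\<^sup>*\<^sup>* x y"
    using assms by (simp add: rtranclp_rtrancl_eq)
  then obtain xs where "rtrancl_path (\<lambda>a b. (a, b) \<in> R) x xs y"
    by (auto simp: rtranclp_eq_rtrancl_path)
  then obtain xs' where xs': "rtrancl_path (\<lambda>a b. (a, b) \<in> R) x xs' y" "distinct (x # xs')"
    by (rule rtrancl_path_distinct)
  have "set xs' \<subseteq> Range R"
    using rtrancl_path_Range[OF xs'(1)] by auto
  with xs' walk show thesis by (intro that) auto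
qed

lemma rtrancl_boundary_edge:
  assumes "(a, b) \<in> R\<^sup>*" "a \<in> A" "b \<notin> A"
  obtains x y where "(x, y) \<in> R" "x \<in> A" "y \<notin> A"
  using assms by (induction rule: rtrancl_induct) auto

lemma has_cycle_iff_successively:
  "has_cycle V E \<longleftrightarrow> (\<exists>xs. 3 \<le> length xs \<and> distinct xs \<and> set xs \<subseteq> V \<and>
     successively (\<lambda>a b. {a, b} \<in> E) xs \<and> {last xs, hd xs} \<in> E)"
  unfolding has_cycle_def successively_conv_nth by simp

lemma has_cycle_mono: "has_cycle V' E' \<Longrightarrow> V' \<subseteq> V \<Longrightarrow> E' \<subseteq> E \<Longrightarrow> has_cycle V E"
  unfolding has_cycle_def by blast

lemma simple_graph_edgeD:
  assumes "simple_graph V E" "{x, y} \<in> E"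
  shows "x \<in> V" "y \<in> V" "x \<noteq> y"
  using assms unfolding simple_graph_def by (auto simp: doubleton_eq_iff)

lemma simple_graph_edges_subset: "simple_graph V E \<Longrightarrow> E \<subseteq> Pow V"
  unfolding simple_graph_def by auto

lemma simple_graph_Range_adj_rel: "simple_graph V E \<Longrightarrow> Range (adj_rel E) \<subseteq> V"
  unfolding adj_rel_def by (auto dest: simple_graph_edgeD)

lemma connected_graph_insert_edge_has_cycle:
  assumes G: "simple_graph A F" "connected_graph A F"
    and xy: "x \<in> A" "y \<in> A" "x \<noteq> y" "{x, y} \<notin> F"
  shows "has_cycle A (insert {x, y} F)"
proof -
  have "(x, y) \<in> (adj_rel F)\<^sup>*"
    using G(2) xy unfolding connected_graph_def by blast
  then obtain xs where xs: "distinct (x # xs)" "successively (\<lambda>a b. (a, b) \<in> adj_rel F) (x # xs)"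
    "last (x # xs) = y" "set xs \<subseteq> Range (adj_rel F)"
    by (rule rtrancl_imp_distinct_walk)
  have "xs \<noteq> [y]"
    using xs(2) xy(4) by (auto simp: adj_rel_def)
  moreover have "xs \<noteq> []"
    using xs(3) xy(3) by auto
  ultimately have "3 \<le> length (x # xs)"
    using xs(3) by (cases xs rule: rev_cases) (auto simp: Suc_le_eq)
  moreover have "successively (\<lambda>a b. {a, b} \<in> insert {x, y} F) (x # xs)"
    using xs(2) by (rule successively_mono) (simp add: adj_rel_def)
  moreover have "{last (x # xs), hd (x # xs)} \<in> insert {x, y} F"
    using xs(3) by (simp add: insert_commute)
  moreover have "set (x # xs) \<subseteq> A"
    using xs(4) simple_graph_Range_adj_rel[OF G(1)] xy(1) by auto
  ultimately show ?thesis
    unfolding has_cycle_iff_successively using xs(1) by blast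
qed

lemma acyclic_tree_subgraphs_eq:
  assumes "\<not> has_cycle V E" "A \<subseteq> V" "F1 \<subseteq> E" "F2 \<subseteq> E" "is_tree A F1" "is_tree A F2"
  shows "F1 = F2"
proof -
  have "F \<subseteq> F'" if T: "is_tree A F" "is_tree A F'" and sub: "F \<subseteq> E" "F' \<subseteq> E" for F F'
  proof
    fix e assume "e \<in> F"
    have G: "simple_graph A F" "simple_graph A F'" "connected_graph A F'"
      using T unfolding is_tree_def by blast+
    obtain x y where xy: "e = {x, y}" "x \<in> A" "y \<in> A" "x \<noteq> y"
      using G(1) \<open>e \<in> F\<close> unfolding simple_graph_def by blast
    show "e \<in> F'"
    proof (rule ccontr)
      assume "e \<notin> F'"
      then have "has_cycle A (insert e F')"
        using connected_graph_insert_edge_has_cycle[OF G(2,3) xy(2-4)] xy(1) by simp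
      moreover have "insert e F' \<subseteq> E"
        using sub \<open>e \<in> F\<close> by blast
      ultimately have "has_cycle V E"
        using assms(2) has_cycle_mono by metis
      with assms(1) show False ..
    qed
  qed
  from this[OF assms(5,6,3,4)] this[OF assms(6,5,4,3)] show ?thesis
    by (rule antisym)
qed

lemma not_has_cycle_if_common_vertex:
  assumes "\<forall>e\<in>F. c \<in> e"
  shows "\<not> has_cycle V F"
proof
  assume "has_cycle V F"
  then obtain xs where xs: "3 \<le> length xs" "distinct xs"
    "successively (\<lambda>a b. {a, b} \<in> F) xs" "{last xs, hd xs} \<in> F"
    unfolding has_cycle_iff_successively by blast
  then obtain a b d ys where xs_eq: "xs = a # b # d # ys"
    by (metis Suc_le_length_iff numeral_3_eq_3)
  \<comment> \<open>c lies on the edges ab and bd, so c = b; but the closing edge joins a to the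
    last vertex, and neither of them is b\<close>
  have "c \<in> {a, b}" "c \<in> {b, d}" "c \<in> {last (d # ys), a}"
    using xs(3,4) assms unfolding xs_eq by auto
  moreover have "last (d # ys) \<in> set (d # ys)"
    by (rule last_in_set) simp
  ultimately show False
    using xs(2) unfolding xs_eq by auto
qed

lemma star_is_tree:
  assumes "finite S" "c \<in> S"
  shows "is_tree S {{c, i} | i. i \<in> S \<and> i \<noteq> c}"
proof -
  let ?F = "{{c, i} | i. i \<in> S \<and> i \<noteq> c}"
  have "(u, c) \<in> adj_rel ?F \<and> (c, u) \<in> adj_rel ?F" if "u \<in> S - {c}" for u
    using that unfolding adj_rel_def by (auto simp: insert_commute)
  then have "(u, c) \<in> (adj_rel ?F)\<^sup>* \<and> (c, u) \<in> (adj_rel ?F)\<^sup>*" if "u \<in> S" for u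
    using that by (cases "u = c") auto
  then have "connected_graph S ?F"
    using assms(2) unfolding connected_graph_def by (blast intro: rtrancl_trans)
  moreover have "simple_graph S ?F"
    using assms unfolding simple_graph_def by blast
  moreover have "\<not> has_cycle S ?F"
    by (rule not_has_cycle_if_common_vertex) blast
  ultimately show ?thesis
    unfolding is_tree_def by blast
qed

lemma simple_graph_insert_leaf:
  "simple_graph A F \<Longrightarrow> x \<in> A \<Longrightarrow> x \<noteq> y \<Longrightarrow> simple_graph (insert y A) (insert {x, y} F)"
  unfolding simple_graph_def by blast

lemma connected_graph_insert_leaf:
  assumes "connected_graph A F" "x \<in> A"
  shows "connected_graph (insert y A) (insert {x, y} F)"
proof -
  let ?R = "(adj_rel (insert {x, y} F))\<^sup>*"
  have "adj_rel F \<subseteq> adj_rel (insert {x, y} F)"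
    unfolding adj_rel_def by auto
  then have "(u, x) \<in> ?R \<and> (x, u) \<in> ?R" if "u \<in> A" for u
    using assms that rtrancl_mono unfolding connected_graph_def by blast
  moreover have "(y, x) \<in> ?R \<and> (x, y) \<in> ?R"
    by (auto simp: adj_rel_def insert_commute)
  ultimately show ?thesis
    unfolding connected_graph_def by (blast intro: rtrancl_trans)
qed

lemma is_tree_subgraph:
  "is_tree V E \<Longrightarrow> V' \<subseteq> V \<Longrightarrow> E' \<subseteq> E \<Longrightarrow> simple_graph V' E' \<Longrightarrow> connected_graph V' E'
    \<Longrightarrow> is_tree V' E'"
  unfolding is_tree_def using has_cycle_mono by blast

lemma is_tree_singleton: "is_tree {v} {}"
  unfolding is_tree_def simple_graph_def connected_graph_def has_cycle_def
  by (auto simp: card_le_Suc0_iff_eq[symmetric] distinct_card)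

lemma subtree_extend:
  assumes T: "is_tree V E" and sub: "(A, F) \<in> subtrees V E" "A \<noteq> {}" "A \<noteq> V"
  obtains y F' where "y \<in> V - A" "(insert y A, F') \<in> subtrees V E"
proof -
  have G: "simple_graph V E" "connected_graph V E"
    using T unfolding is_tree_def by blast+
  have A: "A \<subseteq> V" "F \<subseteq> E" "simple_graph A F" "connected_graph A F"
    using sub(1,2) unfolding subtrees_def is_tree_def by auto
  obtain a b where ab: "a \<in> A" "b \<in> V - A"
    using sub(2,3) A(1) by blast
  then have "(a, b) \<in> (adj_rel E)\<^sup>*"
    using G(2) A(1) unfolding connected_graph_def by blast
  then obtain x y where "(x, y) \<in> adj_rel E" "x \<in> A" "y \<notin> A"
    using ab by (blast elim: rtrancl_boundary_edge)
  then have xy: "{x, y} \<in> E" "x \<in> A" "y \<notin> A"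
    by (simp_all add: adj_rel_def)
  then have "y \<in> V" "x \<noteq> y"
    using simple_graph_edgeD[OF G(1)] by blast+
  have "is_tree (insert y A) (insert {x, y} F)"
  proof (rule is_tree_subgraph[OF T])
    show "insert y A \<subseteq> V" "insert {x, y} F \<subseteq> E"
      using A(1,2) xy(1) \<open>y \<in> V\<close> by auto
    show "simple_graph (insert y A) (insert {x, y} F)"
      using A(3) xy(2) \<open>x \<noteq> y\<close> by (rule simple_graph_insert_leaf)
    show "connected_graph (insert y A) (insert {x, y} F)"
      using A(4) xy(2) by (rule connected_graph_insert_leaf)
  qed
  then have "(insert y A, insert {x, y} F) \<in> subtrees V E"
    using A(1,2) xy(1) \<open>y \<in> V\<close> unfolding subtrees_def by auto
  with \<open>y \<in> V\<close> xy(3) show thesis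
    by (intro that) auto
qed

lemma exists_subtree_card:
  assumes T: "is_tree V E" and "v \<in> V" "1 \<le> k" "k \<le> card V"
  shows "\<exists>A F. (A, F) \<in> subtrees V E \<and> card A = k \<and> v \<in> A"
  using assms(3,4)
proof (induction k rule: nat_induct_at_least)
  case base
  have "({v}, {}) \<in> subtrees V E"
    using assms(2) is_tree_singleton unfolding subtrees_def by auto
  then show ?case by fastforce
next
  case (Suc k)
  then obtain A F where AF: "(A, F) \<in> subtrees V E" "card A = k" "v \<in> A"
    by auto
  have "finite V"
    using T unfolding is_tree_def simple_graph_def by blast
  then have "finite A" "A \<noteq> V"
    using AF Suc.prems unfolding subtrees_def by (auto dest: finite_subset)
  then obtain y F' where "y \<in> V - A" "(insert y A, F') \<in> subtrees V E"
    using subtree_extend[OF T AF(1)] AF(3) by blast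
  with AF \<open>finite A\<close> show ?case
    by (intro exI[of _ "insert y A"] exI[of _ F']) auto
qed

lemma finite_subtrees:
  assumes "finite V" "E \<subseteq> Pow V"
  shows "finite (subtrees V E)"
proof (rule finite_subset)
  show "subtrees V E \<subseteq> Pow V \<times> Pow E"
    unfolding subtrees_def by auto
  show "finite (Pow V \<times> Pow E)"
    using assms by (simp add: finite_subset)
qed

lemma nk_pos:
  assumes "is_tree V E" "v \<in> V" "1 \<le> k" "k \<le> card V"
  shows "0 < nk k v V E"
proof -
  have "simple_graph V E"
    using assms(1) unfolding is_tree_def by blast
  then have "finite (subtrees V E)"
    by (intro finite_subtrees simple_graph_edges_subset) (simp add: simple_graph_def)
  then have "finite {(A, F) \<in> subtrees V E. card A = k \<and> v \<in> A}"
    by (rule finite_subset[rotated]) auto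
  moreover have "{(A, F) \<in> subtrees V E. card A = k \<and> v \<in> A} \<noteq> {}"
    using exists_subtree_card[OF assms] by blast
  ultimately show ?thesis
    unfolding nk_def by (simp add: card_gt_0_iff)
qed

lemma nk_eq_0:
  assumes "finite V" "k = 0 \<or> card V < k"
  shows "nk k v V E = 0"
proof -
  have "\<not> (card A = k \<and> v \<in> A)" if "A \<subseteq> V" for A
  proof
    assume A: "card A = k \<and> v \<in> A"
    have "finite A"
      using assms(1) that by (rule finite_subset[rotated])
    with A have "0 < card A"
      by (auto simp: card_gt_0_iff)
    moreover have "card A \<le> card V"
      using assms(1) that by (rule card_mono)
    ultimately show False
      using A assms(2) by linarith
  qed
  then have "{(A, F) \<in> subtrees V E. card A = k \<and> v \<in> A} = {}"
    unfolding subtrees_def by auto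
  then show ?thesis
    unfolding nk_def by (simp only: card.empty)
qed

lemma nk_le_card_subsets:
  assumes "\<not> has_cycle V E" "finite V"
  shows "nk k v V E \<le> card {S. S \<subseteq> V \<and> card S = k \<and> v \<in> S}"
proof -
  let ?T = "{(A, F) \<in> subtrees V E. card A = k \<and> v \<in> A}"
  have edges_eq: "F1 = F2" if "(A, F1) \<in> ?T" "(A, F2) \<in> ?T" for A F1 F2
  proof -
    from that have "A \<subseteq> V" "F1 \<subseteq> E" "F2 \<subseteq> E" "is_tree A F1" "is_tree A F2"
      unfolding subtrees_def by auto
    then show ?thesis
      by (rule acyclic_tree_subgraphs_eq[OF assms(1)])
  qed
  have "inj_on fst ?T"
  proof (rule inj_onI)
    fix p q assume pq: "p \<in> ?T" "q \<in> ?T" "fst p = fst q"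
    have "(fst p, snd p) \<in> ?T"
      using pq(1) by simp
    moreover have "(fst p, snd q) \<in> ?T"
      using pq(2,3) by simp
    ultimately have "snd p = snd q"
      by (rule edges_eq)
    with pq(3) show "p = q"
      by (simp add: prod_eq_iff)
  qed
  moreover have "fst ` ?T \<subseteq> {S. S \<subseteq> V \<and> card S = k \<and> v \<in> S}"
    unfolding subtrees_def by auto
  moreover have "finite {S. S \<subseteq> V \<and> card S = k \<and> v \<in> S}"
    using assms(2) by simp
  ultimately show ?thesis
    unfolding nk_def by (rule card_inj_on_le)
qed

lemma card_subsets_containing:
  assumes "finite A" "a \<in> A"
  shows "card {S. S \<subseteq> A \<and> card S = k \<and> a \<in> S} = (if k = 0 then 0 else (card A - 1) choose (k - 1))"
proof (cases k)
  case 0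
  have "finite S" if "S \<subseteq> A" for S
    using assms(1) that by (rule finite_subset[rotated])
  then show ?thesis
    using 0 by auto
next
  case (Suc j)
  have "{S. S \<subseteq> A \<and> card S = k \<and> a \<in> S} = insert a ` {B. B \<subseteq> A - {a} \<and> card B = j}"
  proof (rule set_eqI, rule iffI)
    fix S assume S: "S \<in> {S. S \<subseteq> A \<and> card S = k \<and> a \<in> S}"
    then have "finite S"
      using assms(1) by (auto intro: finite_subset)
    with S Suc have "S - {a} \<in> {B. B \<subseteq> A - {a} \<and> card B = j}"
      by auto
    moreover have "S = insert a (S - {a})"
      using S by auto
    ultimately show "S \<in> insert a ` {B. B \<subseteq> A - {a} \<and> card B = j}"
      by (rule rev_image_eqI)
  next
    fix S assume "S \<in> insert a ` {B. B \<subseteq> A - {a} \<and> card B = j}"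
    then obtain B where B: "S = insert a B" "B \<subseteq> A - {a}" "card B = j"
      by blast
    then have "finite B" "a \<notin> B"
      using assms(1) by (auto intro: finite_subset)
    with B Suc assms(2) show "S \<in> {S. S \<subseteq> A \<and> card S = k \<and> a \<in> S}"
      by auto
  qed
  moreover have "inj_on (insert a) {B. B \<subseteq> A - {a} \<and> card B = j}"
    by (rule inj_onI) blast
  ultimately show ?thesis
    using Suc assms by (simp add: card_image n_subsets)
qed

lemma card_subsets_le_nk_star:
  "card {S. S \<subseteq> {0..<n} \<and> card S = k \<and> 0 \<in> S} \<le> nk k (0::nat) {0..<n} (star_edges n)"
  unfolding nk_def
proof (rule card_inj_on_le[where f = "\<lambda>S. (S, {{0, i} | i. i \<in> S \<and> i \<noteq> 0})"])
  show "inj_on (\<lambda>S. (S, {{0, i} | i. i \<in> S \<and> i \<noteq> 0})) {S. S \<subseteq> {0..<n} \<and> card S = k \<and> 0 \<in> S}"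
    by (rule inj_onI) simp
  show "(\<lambda>S. (S, {{0, i} | i. i \<in> S \<and> i \<noteq> 0})) ` {S. S \<subseteq> {0..<n} \<and> card S = k \<and> 0 \<in> S}
      \<subseteq> {(V', E') \<in> subtrees {0..<n} (star_edges n). card V' = k \<and> 0 \<in> V'}"
  proof (rule image_subsetI)
    fix S :: "nat set" assume S: "S \<in> {S. S \<subseteq> {0..<n} \<and> card S = k \<and> 0 \<in> S}"
    then have "is_tree S {{0, i} | i. i \<in> S \<and> i \<noteq> 0}"
      by (intro star_is_tree) (auto intro: finite_subset)
    moreover have "{{0, i} | i. i \<in> S \<and> i \<noteq> 0} \<subseteq> star_edges n"
      using S unfolding star_edges_def by fastforce
    ultimately show "(S, {{0, i} | i. i \<in> S \<and> i \<noteq> 0})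
        \<in> {(V', E') \<in> subtrees {0..<n} (star_edges n). card V' = k \<and> 0 \<in> V'}"
      using S unfolding subtrees_def by auto
  qed
  have "finite (subtrees {0..<n} (star_edges n))"
    by (rule finite_subtrees) (auto simp: star_edges_def)
  then show "finite {(V', E') \<in> subtrees {0..<n} (star_edges n). card V' = k \<and> (0::nat) \<in> V'}"
    by (rule finite_subset[rotated]) auto
qed

lemma path_edges_Suc: "{x, y} \<in> path_edges n \<Longrightarrow> y = Suc x \<or> x = Suc y"
  unfolding path_edges_def by (auto simp: doubleton_eq_iff)

lemma path_subtree_interval:
  assumes "(A, F) \<in> subtrees {0..<n} (path_edges n)" "A \<noteq> {}"
  shows "A = {Min A..Max A}" "F = {{j, Suc j} | j. Min A \<le> j \<and> j < Max A}"
proof -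
  have T: "simple_graph A F" "connected_graph A F" "F \<subseteq> path_edges n"
    using assms unfolding subtrees_def is_tree_def by auto
  have "finite A"
    using T(1) unfolding simple_graph_def by blast
  then have ends: "Min A \<in> A" "Max A \<in> A"
    using assms(2) by simp_all
  have edge: "{j, Suc j} \<in> F" if "Min A \<le> j" "j < Max A" for j
  proof -
    have "(Min A, Max A) \<in> (adj_rel F)\<^sup>*"
      using T(2) ends unfolding connected_graph_def by blast
    moreover have "Min A \<in> {..j}" "Max A \<notin> {..j}"
      using that by auto
    ultimately obtain x y where "(x, y) \<in> adj_rel F" "x \<in> {..j}" "y \<notin> {..j}"
      by (rule rtrancl_boundary_edge)
    then have xy: "{x, y} \<in> F" "x \<le> j" "j < y"
      by (simp_all add: adj_rel_def)
    then have "y = Suc x \<or> x = Suc y"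
      using T(3) path_edges_Suc by blast
    with xy(2,3) have "x = j" "y = Suc j"
      by auto
    with xy(1) show ?thesis
      by simp
  qed
  show A_eq: "A = {Min A..Max A}"
  proof
    show "A \<subseteq> {Min A..Max A}"
      using \<open>finite A\<close> by auto
    show "{Min A..Max A} \<subseteq> A"
    proof
      fix j assume j: "j \<in> {Min A..Max A}"
      show "j \<in> A"
      proof (cases "j = Max A")
        case False
        with j have "{j, Suc j} \<in> F"
          by (intro edge) auto
        then show ?thesis
          by (rule simple_graph_edgeD(1)[OF T(1)])
      qed (use ends in simp)
    qed
  qed
  show "F = {{j, Suc j} | j. Min A \<le> j \<and> j < Max A}"
  proof
    show "F \<subseteq> {{j, Suc j} | j. Min A \<le> j \<and> j < Max A}"
    proof
      fix e assume "e \<in> F"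
      then obtain j where j: "e = {j, Suc j}"
        using T(3) unfolding path_edges_def by auto
      with \<open>e \<in> F\<close> have "j \<in> A" "Suc j \<in> A"
        using simple_graph_edgeD[OF T(1)] by blast+
      then have "Min A \<le> j" "j < Max A"
        using A_eq by (metis atLeastAtMost_iff Suc_le_eq)+
      with j show "e \<in> {{j, Suc j} | j. Min A \<le> j \<and> j < Max A}"
        by blast
    qed
    show "{{j, Suc j} | j. Min A \<le> j \<and> j < Max A} \<subseteq> F"
      using edge by blast
  qed
qed

lemma nk_path_end_le_1:
  assumes "\<nu> = 0 \<or> \<nu> = n - 1"
  shows "nk k \<nu> {0..<n} (path_edges n) \<le> 1"
proof -
  let ?P = "{(A, F) \<in> subtrees {0..<n} (path_edges n). card A = k \<and> \<nu> \<in> A}"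
  have ends: "Min A = (if \<nu> = 0 then 0 else n - k) \<and> Max A = (if \<nu> = 0 then k - 1 else n - 1)"
    if "(A, F) \<in> ?P" for A F
  proof -
    have A: "(A, F) \<in> subtrees {0..<n} (path_edges n)" "card A = k" "\<nu> \<in> A" "A \<subseteq> {0..<n}"
      using that unfolding subtrees_def by auto
    then have "A \<noteq> {}" "finite A"
      using finite_subset by auto
    then have "Max A \<in> A" "A = {Min A..Max A}"
      using path_subtree_interval(1)[OF A(1)] by simp_all
    with A(2-4) have "Min A \<le> \<nu>" "\<nu> \<le> Max A" "Max A < n" "Suc (Max A) - Min A = k"
      by (metis atLeastAtMost_iff, metis atLeastAtMost_iff, auto, metis card_atLeastAtMost)
    with assms show ?thesis
      by auto
  qed
  have unique: "(A1, F1) = (A2, F2)" if "(A1, F1) \<in> ?P" "(A2, F2) \<in> ?P" for A1 F1 A2 F2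
  proof -
    have "A1 \<noteq> {}" "A2 \<noteq> {}"
      using that by auto
    then have "A1 = {Min A1..Max A1}" "F1 = {{j, Suc j} | j. Min A1 \<le> j \<and> j < Max A1}"
      "A2 = {Min A2..Max A2}" "F2 = {{j, Suc j} | j. Min A2 \<le> j \<and> j < Max A2}"
      using that path_subtree_interval by blast+
    moreover have "Min A1 = Min A2" "Max A1 = Max A2"
      using ends[OF that(1)] ends[OF that(2)] by simp_all
    ultimately show ?thesis
      by simp
  qed
  have "p = q" if "p \<in> ?P" "q \<in> ?P" for p q
  proof -
    from that have "(fst p, snd p) \<in> ?P" "(fst q, snd q) \<in> ?P"
      by (simp_all only: prod.collapse)
    then have "(fst p, snd p) = (fst q, snd q)"
      by (rule unique)
    then show ?thesis
      by simp
  qed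
  moreover have "finite (subtrees {0..<n} (path_edges n))"
    by (rule finite_subtrees) (auto simp: path_edges_def)
  then have "finite ?P"
    by (rule finite_subset[rotated]) auto
  ultimately show ?thesis
    unfolding nk_def by (simp add: card_le_Suc0_iff_eq)
qed

theorem lemma2:
  fixes n :: nat and V :: "'a set" and E :: "'a set set" and v :: 'a and \<nu> k :: nat
  assumes "0 < n"
    and "is_tree V E" and "card V = n" and "v \<in> V"
    and "\<nu> = 0 \<or> \<nu> = n - 1"
  shows "nk k (0::nat) {0..<n} (star_edges n) \<ge> nk k v V E \<and>
         nk k v V E \<ge> nk k \<nu> {0..<n} (path_edges n)"
proof
  have "finite V" "\<not> has_cycle V E"
    using assms(2) unfolding is_tree_def simple_graph_def by auto
  then have "nk k v V E \<le> card {S. S \<subseteq> V \<and> card S = k \<and> v \<in> S}"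
    by (rule nk_le_card_subsets[rotated])
  also have "\<dots> = card {S. S \<subseteq> {0..<n} \<and> card S = k \<and> 0 \<in> S}"
    using assms(1,3,4) \<open>finite V\<close> by (simp add: card_subsets_containing)
  also have "\<dots> \<le> nk k (0::nat) {0..<n} (star_edges n)"
    by (rule card_subsets_le_nk_star)
  finally show "nk k (0::nat) {0..<n} (star_edges n) \<ge> nk k v V E" .
  show "nk k v V E \<ge> nk k \<nu> {0..<n} (path_edges n)"
  proof (cases "1 \<le> k \<and> k \<le> n")
    case True
    then have "0 < nk k v V E"
      using assms(3) by (intro nk_pos[OF assms(2,4)]) auto
    moreover have "nk k \<nu> {0..<n} (path_edges n) \<le> 1"
      using assms(5) by (rule nk_path_end_le_1)
    ultimately show ?thesis
      by simp
  next
    case False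
    then have "nk k \<nu> {0..<n} (path_edges n) = 0"
      by (intro nk_eq_0) auto
    then show ?thesis
      by simp
  qed
qed

end
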